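(* Let $X$ be a set with $n\ge1$ elements and $\lambda_n=|\mathfrak{P}(X)|$. Then $$\lambda_n=\sum_{k=1}^{n}\alpha_{n,k}\left(\sum_{\ell=0}^{\lfloor k/3\rfloor}\beta_{k,\ell}\,3^{\ell}\right),\qquad \beta_{k,\ell}=\frac{k!}{6^{\ell}\,\ell!\,(k-3\ell)!},$$ where $\alpha_{n,k}$ is the Stirling number of the second kind (number of partitions of an $n$-set into $k$ blocks) and $\beta_{k,\ell}$ is the number of partitions of a $k$-element set into $\ell$ blocks of size $3$ and $k-3\ell$ blocks of size $1$.
   Context: A set pair system on a finite set $X$ is a set of ordered pairs $(S,H)$ of subsets of $X$ with $S\ne\emptyset$ and $S\cap H=\emptyset$. A polestar system is a set pair system $\mathcal{S}$ with (PL1) $\{S:(S,H)\in\mathcal{S}\}$ is a partition of $X$; (PL2) distinct $(S,H),(S',H')\in\mathcal{S}$ have $S\ne S'$; (PL3) for each $(S,H)\in\mathcal{S}$ with $H\ne\emptyset$, $(H,\emptyset)\in\mathcal{S}$ and there is exactly one $(S',H')\in\mathcal{S}$ with $(S',H')\ne(S,H)$ and $H'=H$. $\mathfrak{P}(X)$ is the set of polestar systems on $X$. *)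

theory Defs
  imports Complex_Main "HOL-Combinatorics.Stirling" "HOL-Library.Disjoint_Sets"
begin

definition set_pair_system :: "'a set \<Rightarrow> ('a set \<times> 'a set) set \<Rightarrow> bool" where
  "set_pair_system X \<S> \<longleftrightarrow>
     (\<forall>(S, H) \<in> \<S>. S \<subseteq> X \<and> H \<subseteq> X \<and> S \<noteq> {} \<and> S \<inter> H = {})"

definition polestar_system :: "'a set \<Rightarrow> ('a set \<times> 'a set) set \<Rightarrow> bool" where
  "polestar_system X \<S> \<longleftrightarrow>
     set_pair_system X \<S>
   \<and> partition_on X (fst ` \<S>)
   \<and> (\<forall>p \<in> \<S>. \<forall>q \<in> \<S>. p \<noteq> q \<longrightarrow> fst p \<noteq> fst q)
   \<and> (\<forall>(S, H) \<in> \<S>. H \<noteq> {} \<longrightarrow>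
        (H, {}) \<in> \<S> \<and> (\<exists>!q. q \<in> \<S> \<and> q \<noteq> (S, H) \<and> snd q = H))"

definition polestar_systems :: "'a set \<Rightarrow> ('a set \<times> 'a set) set set" where
  "polestar_systems X = {\<S>. polestar_system X \<S>}"

end

theory Submission
  imports Defs "HOL-Library.FuncSet"
begin

text \<open>
  A polestar system on \<open>X\<close> is the graph \<open>S \<mapsto> (S, h S)\<close> of a map \<open>h\<close> on a partition \<open>P\<close>
  of \<open>X\<close>: every block has the empty pole, except that some blocks are grouped into disjoint
  stars \<open>{C, A, B}\<close> with \<open>h A = h B = C\<close> and \<open>h C = {}\<close>. Counting these maps on \<open>k + 1\<close>
  blocks by the position of one fixed block (isolated, or in one of \<open>k choose 2\<close> triples
  through it, with one of three possible poles) gives \<open>f (k + 1) = f k + 3 * (k choose 2) * f (k - 2)\<close>,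
  which is solved by \<open>f k = \<Sum>l. k! / (6^l * l! * (k - 3 * l)!) * 3^l\<close>: choose \<open>l\<close> disjoint
  triples and a pole in each. Grouping the partitions of \<open>X\<close> by their number of blocks then
  produces the Stirling numbers.
\<close>

section \<open>Partitions and Stirling numbers of the second kind\<close>

lemma partition_on_block_disjnt_Union:
  assumes "partition_on A P" "B \<in> P"
  shows "disjnt B (\<Union>(P - {B}))"
  using partition_onD2[OF assms(1)] assms(2) by (auto simp: disjnt_def disjoint_def)

lemma partition_on_Diff_block:
  assumes "partition_on A P" "B \<in> P"
  shows "partition_on (A - B) (P - {B})"
proof -
  have "insert B (P - {B}) = P" using assms(2) by blast
  then show ?thesis
    using partition_on_insert[OF partition_on_block_disjnt_Union[OF assms]] assms(1) by simp
qed

lemma partition_on_insert_singleton: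
  assumes "x \<notin> A" "partition_on A Q"
  shows "partition_on (insert x A) (insert {x} Q)"
proof -
  have "disjnt {x} (\<Union>Q)" using assms partition_onD1[OF assms(2)] by auto
  moreover have "insert x A - {x} = A" using assms(1) by blast
  ultimately show ?thesis using assms(2) by (simp add: partition_on_insert)
qed

lemma partition_on_insert_into_block:
  assumes "x \<notin> A" "partition_on A Q" "B \<in> Q"
  shows "partition_on (insert x A) (insert (insert x B) (Q - {B}))"
proof -
  have "disjnt (insert x B) (\<Union>(Q - {B}))"
    using partition_on_block_disjnt_Union[OF assms(2,3)] assms(1) partition_onD1[OF assms(2)]
    by (auto simp: disjnt_def)
  moreover have "insert x A - insert x B = A - B" using assms(1) by blast
  moreover have "insert x B \<subseteq> insert x A" using assms(3) partition_onD1[OF assms(2)] by blast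
  ultimately show ?thesis
    using partition_on_Diff_block[OF assms(2,3)] by (simp add: partition_on_insert)
qed

lemma partition_on_remove_from_block:
  assumes "x \<notin> A" "partition_on (insert x A) P" "C \<in> P" "x \<in> C" "C \<noteq> {x}"
  shows "partition_on A (insert (C - {x}) (P - {C}))"
proof -
  have "disjnt (C - {x}) (\<Union>(P - {C}))"
    using partition_on_block_disjnt_Union[OF assms(2,3)] by (auto simp: disjnt_def)
  moreover have "A - (C - {x}) = insert x A - C" using assms(1,4) by blast
  moreover have "C - {x} \<subseteq> A" "C - {x} \<noteq> {}"
    using assms(3-5) partition_onD1[OF assms(2)] by blast+
  ultimately show ?thesis
    using partition_on_Diff_block[OF assms(2,3)] by (simp add: partition_on_insert)
qed

lemma bij_betw_partitions_insert_singleton: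
  assumes "finite A" "x \<notin> A"
  shows "bij_betw (insert {x}) {Q. partition_on A Q \<and> card Q = k}
           {P. partition_on (insert x A) P \<and> card P = Suc k \<and> {x} \<in> P}"
proof (rule bij_betw_imageI)
  have x_notin: "{x} \<notin> Q" if "partition_on A Q" for Q
    using partition_onD1[OF that] assms(2) by blast
  show "inj_on (insert {x}) {Q. partition_on A Q \<and> card Q = k}"
    by (rule inj_onI) (metis x_notin insert_ident mem_Collect_eq)
  show "insert {x} ` {Q. partition_on A Q \<and> card Q = k} =
          {P. partition_on (insert x A) P \<and> card P = Suc k \<and> {x} \<in> P}"
  proof (intro equalityI subsetI)
    fix P assume "P \<in> insert {x} ` {Q. partition_on A Q \<and> card Q = k}"
    then obtain Q where "partition_on A Q" "card Q = k" "P = insert {x} Q" by blast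
    then show "P \<in> {P. partition_on (insert x A) P \<and> card P = Suc k \<and> {x} \<in> P}"
      using partition_on_insert_singleton[OF assms(2)] finite_elements[OF assms(1)] x_notin by auto
  next
    fix P assume P: "P \<in> {P. partition_on (insert x A) P \<and> card P = Suc k \<and> {x} \<in> P}"
    then have "partition_on A (P - {{x}})" "card (P - {{x}}) = k"
      using partition_on_Diff_block[of "insert x A" P "{x}"] assms(2) by auto
    moreover have "P = insert {x} (P - {{x}})" using P by blast
    ultimately show "P \<in> insert {x} ` {Q. partition_on A Q \<and> card Q = k}" by blast
  qed
qed

lemma inj_on_partitions_insert_into_block:
  assumes "x \<notin> A"
  shows "inj_on (\<lambda>(Q, B). insert (insert x B) (Q - {B})) (SIGMA Q:{Q. partition_on A Q}. Q)"
proof (rule inj_onI, clarsimp)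
  have x_notin: "x \<notin> B" if "partition_on A Q" "B \<in> Q" for Q B
    using partition_onD1[OF that(1)] that(2) assms by blast
  fix Q B Q' B'
  assume Q: "partition_on A Q" "B \<in> Q" and Q': "partition_on A Q'" "B' \<in> Q'"
    and eq: "insert (insert x B) (Q - {B}) = insert (insert x B') (Q' - {B'})"
  have "insert x B' \<in> insert (insert x B) (Q - {B})" unfolding eq by simp
  then have "insert x B' = insert x B" using x_notin[OF Q(1), of "insert x B'"] by blast
  then have B: "B' = B" using x_notin[OF Q] x_notin[OF Q'] by (simp add: insert_ident)
  have "insert x B \<notin> Q - {B}" "insert x B \<notin> Q' - {B}"
    using x_notin[OF Q(1), of "insert x B"] x_notin[OF Q'(1), of "insert x B"] by blast+
  then have "Q - {B} = Q' - {B}" using eq B by (simp add: insert_ident)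
  then show "Q = Q' \<and> B = B'" using Q(2) Q'(2) B by blast
qed

lemma partition_on_remove_point:
  assumes "finite A" "x \<notin> A" "partition_on (insert x A) P" "{x} \<notin> P"
  obtains Q B where "partition_on A Q" "card Q = card P" "B \<in> Q" "P = insert (insert x B) (Q - {B})"
proof -
  have "x \<in> \<Union>P" by (metis insertI1 partition_onD1[OF assms(3)])
  then obtain C where C: "C \<in> P" "x \<in> C" by blast
  have "C \<noteq> {x}" using C assms(4) by blast
  define B where "B = C - {x}"
  have Q: "partition_on A (insert B (P - {C}))"
    unfolding B_def using partition_on_remove_from_block[OF assms(2,3) C \<open>C \<noteq> {x}\<close>] .
  have "B \<notin> P - {C}"
    using partition_on_block_disjnt_Union[OF assms(3) C(1)] C \<open>C \<noteq> {x}\<close>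
    by (auto simp: B_def disjnt_def)
  moreover have "finite P" using finite_elements[OF _ assms(3)] assms(1) by simp
  ultimately have card_Q: "card (insert B (P - {C})) = card P"
    and diff: "insert B (P - {C}) - {B} = P - {C}"
    using C(1) card_gt_0_iff[of P] by auto
  have "P = insert (insert x B) (insert B (P - {C}) - {B})"
    unfolding diff using C by (simp add: B_def insert_absorb)
  then show ?thesis by (rule that[OF Q card_Q insertI1])
qed

lemma bij_betw_partitions_insert_into_block:
  assumes "finite A" "x \<notin> A"
  shows "bij_betw (\<lambda>(Q, B). insert (insert x B) (Q - {B}))
           (SIGMA Q:{Q. partition_on A Q \<and> card Q = k}. Q)
           {P. partition_on (insert x A) P \<and> card P = k \<and> {x} \<notin> P}"
proof (rule bij_betw_imageI)
  show "inj_on (\<lambda>(Q, B). insert (insert x B) (Q - {B})) (SIGMA Q:{Q. partition_on A Q \<and> card Q = k}. Q)"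
    by (rule inj_on_subset[OF inj_on_partitions_insert_into_block[OF assms(2)]]) auto
  show "(\<lambda>(Q, B). insert (insert x B) (Q - {B})) ` (SIGMA Q:{Q. partition_on A Q \<and> card Q = k}. Q) =
          {P. partition_on (insert x A) P \<and> card P = k \<and> {x} \<notin> P}"
  proof (intro equalityI subsetI)
    fix P assume "P \<in> (\<lambda>(Q, B). insert (insert x B) (Q - {B})) ` (SIGMA Q:{Q. partition_on A Q \<and> card Q = k}. Q)"
    then obtain Q B where Q: "partition_on A Q" "card Q = k" "B \<in> Q"
      and P: "P = insert (insert x B) (Q - {B})" by auto
    have x_notin: "x \<notin> D" if "D \<in> Q" for D using partition_onD1[OF Q(1)] that assms(2) by blast
    have "insert x B \<notin> Q - {B}" using x_notin[of "insert x B"] by blast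
    moreover have "finite Q" using finite_elements[OF assms(1) Q(1)] .
    ultimately have "card P = Suc (card (Q - {B}))" unfolding P by simp
    then have card_P: "card P = k" using Q(2,3) \<open>finite Q\<close> card_gt_0_iff[of Q] by auto
    have "B \<noteq> {}" using partition_onD3[OF Q(1)] Q(3) by blast
    then have "{x} \<notin> P" unfolding P using x_notin x_notin[OF Q(3)] by auto
    then show "P \<in> {P. partition_on (insert x A) P \<and> card P = k \<and> {x} \<notin> P}"
      using card_P partition_on_insert_into_block[OF assms(2) Q(1,3)] unfolding P by blast
  next
    fix P assume "P \<in> {P. partition_on (insert x A) P \<and> card P = k \<and> {x} \<notin> P}"
    then have P: "partition_on (insert x A) P" "card P = k" "{x} \<notin> P" by blast+
    obtain Q B where "partition_on A Q" "card Q = card P" "B \<in> Q" "P = insert (insert x B) (Q - {B})"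
      using partition_on_remove_point[OF assms P(1,3)] .
    then show "P \<in> (\<lambda>(Q, B). insert (insert x B) (Q - {B})) ` (SIGMA Q:{Q. partition_on A Q \<and> card Q = k}. Q)"
      using P(2) by (intro image_eqI[where x = "(Q, B)"]) auto
  qed
qed

lemma card_partitions_eq_Stirling:
  assumes "finite A"
  shows "card {P. partition_on A P \<and> card P = k} = Stirling (card A) k"
  using assms
proof (induction A arbitrary: k rule: finite_induct)
  case empty
  have partitions_empty: "{P. partition_on {} P \<and> card P = k} = (if k = 0 then {{}} else {})"
    by (auto simp: partition_on_empty)
  show ?case unfolding partitions_empty by (cases k) simp_all
next
  case (insert x A)
  have fin: "finite {P. partition_on (insert x A) P \<and> Q P}" for Q
    using finitely_many_partition_on[of "insert x A"] insert(1) by (auto elim: rev_finite_subset)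
  show ?case
  proof (cases k)
    case 0
    have "P \<noteq> {}" if "partition_on (insert x A) P" for P
      using partition_onD1[OF that] by auto
    then have no_partitions: "{P. partition_on (insert x A) P \<and> card P = 0} = {}"
      using finite_elements[of "insert x A"] insert(1) by (auto simp: card_eq_0_iff)
    show ?thesis unfolding 0 no_partitions using insert(1,2) by simp
  next
    case (Suc j)
    have split: "{P. partition_on (insert x A) P \<and> card P = Suc j} =
        {P. partition_on (insert x A) P \<and> card P = Suc j \<and> {x} \<in> P} \<union>
        {P. partition_on (insert x A) P \<and> card P = Suc j \<and> {x} \<notin> P}" by blast
    have "card {P. partition_on (insert x A) P \<and> card P = Suc j \<and> {x} \<in> P} = Stirling (card A) j"
      using bij_betw_same_card[OF bij_betw_partitions_insert_singleton[OF insert(1,2)]] insert.IH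
      by simp
    moreover have "card {P. partition_on (insert x A) P \<and> card P = Suc j \<and> {x} \<notin> P} =
        Suc j * Stirling (card A) (Suc j)"
    proof -
      have "card {P. partition_on (insert x A) P \<and> card P = Suc j \<and> {x} \<notin> P} =
          card (SIGMA Q:{Q. partition_on A Q \<and> card Q = Suc j}. Q)"
        using bij_betw_same_card[OF bij_betw_partitions_insert_into_block[OF insert(1,2)]] by simp
      also have "\<dots> = (\<Sum>Q | partition_on A Q \<and> card Q = Suc j. card Q)"
        using finitely_many_partition_on[OF insert(1)] finite_elements[OF insert(1)]
        by (intro card_SigmaI) (auto simp: finite_subset)
      finally show ?thesis using insert.IH by simp
    qed
    ultimately show ?thesis
      unfolding split Suc using insert(1,2) fin by (subst card_Un_disjoint) auto
  qed
qed

lemma card_partition_on_le: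
  assumes "finite A" "partition_on A P"
  shows "card P \<le> card A"
proof -
  have "card P = (\<Sum>p\<in>P. 1)" by simp
  also have "\<dots> \<le> (\<Sum>p\<in>P. card p)"
    using partition_onD1[OF assms(2)] partition_onD3[OF assms(2)] assms(1)
    by (intro sum_mono) (auto simp: Suc_le_eq card_gt_0_iff intro: finite_subset)
  also have "\<dots> = card A"
    using card_Union_disjoint[OF partition_onD2[OF assms(2)]] partition_onD1[OF assms(2)] assms(1)
    by (metis Union_upper finite_subset)
  finally show ?thesis .
qed

lemma sum_partitions_by_card:
  fixes f :: "nat \<Rightarrow> 'b::comm_semiring_1"
  assumes "finite A"
  shows "(\<Sum>P | partition_on A P. f (card P)) = (\<Sum>k\<le>card A. of_nat (Stirling (card A) k) * f k)"
proof -
  have "(\<Sum>P | partition_on A P. f (card P)) =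
      (\<Sum>k\<le>card A. \<Sum>P | partition_on A P \<and> card P = k. f (card P))"
    using finitely_many_partition_on[OF assms] card_partition_on_le[OF assms]
    by (subst sum.group[symmetric, where g = card and T = "{..card A}"]) (auto intro!: sum.cong)
  also have "\<dots> = (\<Sum>k\<le>card A. of_nat (Stirling (card A) k) * f k)"
    using card_partitions_eq_Stirling[OF assms] by (intro sum.cong) auto
  finally show ?thesis .
qed

section \<open>The counting sequence and its closed form\<close>

text \<open>For \<open>k < 2\<close> the second summand vanishes, so the truncated \<open>k - 2\<close> is harmless.\<close>

fun pole_map_count :: "nat \<Rightarrow> nat" where
  "pole_map_count 0 = 1"
| "pole_map_count (Suc k) = pole_map_count k + 3 * (k choose 2) * pole_map_count (k - 2)"

text \<open>The \<open>l\<close>-th summand of the closed form, set to zero where \<open>k - 3 * l\<close> would truncate.\<close>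

definition star_term :: "nat \<Rightarrow> nat \<Rightarrow> real" where
  "star_term k l = (if 3 * l \<le> k then fact k / (6 ^ l * fact l * fact (k - 3 * l)) * 3 ^ l else 0)"

lemma star_term_0 [simp]: "star_term k 0 = 1"
  by (simp add: star_term_def)

lemma star_term_recurrence:
  "star_term (m + 3) (Suc l) = star_term (m + 2) (Suc l) + 3 * real ((m + 2) choose 2) * star_term m l"
proof (cases "3 * l \<le> m")
  case True
  define d where "d = m - 3 * l"
  have m: "m = 3 * l + d" using True by (simp add: d_def)
  define c where "c = fact (m + 2) / (6 ^ Suc l * fact (Suc l)) * (3 :: real) ^ Suc l"
  define E where "E = (real m + 2) * (real m + 1)"
  have t1: "star_term m l = fact m / (6 ^ l * fact l * fact d) * 3 ^ l"
    by (simp add: star_term_def m)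
  have t2: "star_term (m + 2) (Suc l) = real d * c / fact d"
  proof (cases d)
    case (Suc e)
    then have "3 * Suc l \<le> m + 2" "m + 2 - 3 * Suc l = e" using m by simp_all
    then show ?thesis using Suc by (simp add: star_term_def c_def)
  qed (simp add: star_term_def m)
  have t3: "star_term (m + 3) (Suc l) = (real m + 3) * c / fact d"
    by (simp add: star_term_def c_def m numeral_eq_Suc field_simps)
  have "fact (m + 2) = E * fact m"
    by (simp add: E_def numeral_eq_Suc algebra_simps)
  then have c: "c = E * fact m * 3 ^ l / (2 * real (Suc l) * 6 ^ l * fact l)"
    unfolding c_def fact_Suc power_Suc by (simp del: of_nat_Suc add: field_simps)
  have choose: "real ((m + 2) choose 2) = E / 2"
    unfolding E_def by (induction m) (simp_all add: numeral_eq_Suc field_simps)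
  have "real m + 3 = real d + 3 * real (Suc l)" using m by simp
  then show ?thesis unfolding t1 t2 t3 c choose by (simp del: of_nat_Suc add: field_simps)
qed (simp add: star_term_def)

lemma sum_star_term_atMost:
  assumes "k div 3 \<le> N"
  shows "(\<Sum>l\<le>N. star_term k l) = (\<Sum>l = 0..k div 3. fact k / (6 ^ l * fact l * fact (k - 3 * l)) * 3 ^ l)"
proof -
  have "(\<Sum>l\<le>N. star_term k l) = (\<Sum>l = 0..k div 3. star_term k l)"
    using assms by (intro sum.mono_neutral_right) (auto simp: star_term_def)
  also have "\<dots> = (\<Sum>l = 0..k div 3. fact k / (6 ^ l * fact l * fact (k - 3 * l)) * 3 ^ l)"
    by (intro sum.cong) (auto simp: star_term_def)
  finally show ?thesis .
qed

lemma sum_star_term_recurrence: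
  "(\<Sum>l\<le>m + 3. star_term (m + 3) l) =
     (\<Sum>l\<le>m + 3. star_term (m + 2) l) + 3 * real ((m + 2) choose 2) * (\<Sum>l\<le>m + 2. star_term m l)"
proof -
  have shift: "(\<Sum>l\<le>m + 3. f l) = f 0 + (\<Sum>l\<le>m + 2. f (Suc l))" for f :: "nat \<Rightarrow> real"
  proof -
    have "m + 3 = Suc (m + 2)" by simp
    then show ?thesis by (simp only: sum.atMost_Suc_shift)
  qed
  have "(\<Sum>l\<le>m + 2. star_term (m + 3) (Suc l)) =
      (\<Sum>l\<le>m + 2. star_term (m + 2) (Suc l)) + 3 * real ((m + 2) choose 2) * (\<Sum>l\<le>m + 2. star_term m l)"
    by (simp only: star_term_recurrence sum.distrib sum_distrib_left mult.assoc)
  then show ?thesis by (simp only: shift star_term_0)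
qed

lemma pole_map_count_closed_form:
  "real (pole_map_count k) = (\<Sum>l = 0..k div 3. fact k / (6 ^ l * fact l * fact (k - 3 * l)) * 3 ^ l)"
proof (induction k rule: less_induct)
  case (less k)
  have IH: "real (pole_map_count j) = (\<Sum>l\<le>N. star_term j l)" if "j < k" "j div 3 \<le> N" for j N
    using less[OF that(1)] sum_star_term_atMost[OF that(2)] by simp
  have "real (pole_map_count k) = (\<Sum>l\<le>k. star_term k l)"
  proof (cases "k < 3")
    case True
    then have "k = 0 \<or> k = 1 \<or> k = 2" by auto
    then show ?thesis by (auto simp: star_term_def numeral_eq_Suc)
  next
    case False
    then obtain m where k: "k = m + 3" by (metis add.commute le_Suc_ex not_less)
    have "real (pole_map_count k) =
        real (pole_map_count (m + 2)) + 3 * real ((m + 2) choose 2) * real (pole_map_count m)"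
      by (simp add: k numeral_eq_Suc algebra_simps)
    also have "\<dots> = (\<Sum>l\<le>m + 3. star_term (m + 2) l) + 3 * real ((m + 2) choose 2) * (\<Sum>l\<le>m + 2. star_term m l)"
      using IH[of "m + 2" "m + 3"] IH[of m "m + 2"] k by simp
    also have "\<dots> = (\<Sum>l\<le>k. star_term k l)"
      unfolding k by (rule sum_star_term_recurrence[symmetric])
    finally show ?thesis .
  qed
  then show ?case using sum_star_term_atMost[of k k] by simp
qed

section \<open>Pole maps\<close>

text \<open>
  The value \<open>z \<notin> B\<close> means ``no pole''; polestar systems use \<open>z = {}\<close>. A pole \<open>h x \<in> B\<close> has
  no pole itself and is the pole of exactly two points, so the non-trivial components of \<open>h\<close>
  are stars of three points.
\<close>

definition pole_maps :: "'b set \<Rightarrow> 'b \<Rightarrow> ('b \<Rightarrow> 'b) set" where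
  "pole_maps B z = {h \<in> extensional B. \<forall>x\<in>B. h x \<noteq> z \<longrightarrow>
     h x \<in> B \<and> h (h x) = z \<and> (\<exists>!y. y \<in> B \<and> y \<noteq> x \<and> h y = h x)}"

lemma pole_mapsI:
  assumes "h \<in> extensional B"
    and "\<And>x. x \<in> B \<Longrightarrow> h x \<noteq> z \<Longrightarrow> h x \<in> B \<and> h (h x) = z \<and> (\<exists>!y. y \<in> B \<and> y \<noteq> x \<and> h y = h x)"
  shows "h \<in> pole_maps B z"
  using assms by (simp add: pole_maps_def)

lemma pole_mapsD:
  assumes "h \<in> pole_maps B z" "x \<in> B" "h x \<noteq> z"
  shows "h x \<in> B" "h (h x) = z" "\<exists>!y. y \<in> B \<and> y \<noteq> x \<and> h y = h x"
  using assms by (auto simp: pole_maps_def)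

lemma pole_maps_extensional: "h \<in> pole_maps B z \<Longrightarrow> h \<in> extensional B"
  by (simp add: pole_maps_def)

lemma finite_pole_maps:
  assumes "finite B"
  shows "finite (pole_maps B z)"
proof (rule finite_subset)
  show "pole_maps B z \<subseteq> PiE B (\<lambda>_. insert z B)"
    by (auto simp: pole_maps_def PiE_iff extensional_def)
  show "finite (PiE B (\<lambda>_. insert z B))"
    using assms by (simp add: finite_PiE)
qed

lemma pole_maps_empty: "pole_maps {} z = {\<lambda>_. undefined}"
  by (auto simp: pole_maps_def)

lemma const_pole_map: "restrict (\<lambda>_. z) T \<in> pole_maps T z"
  by (simp add: pole_maps_def)

lemma pole_maps_glue:
  assumes disj: "T \<inter> U = {}" and z: "z \<notin> T \<union> U"
    and f: "f \<in> pole_maps T z" and g: "g \<in> pole_maps U z"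
  shows "(\<lambda>y. if y \<in> T then f y else g y) \<in> pole_maps (T \<union> U) z"
proof -
  define h where "h = (\<lambda>y. if y \<in> T then f y else g y)"
  have hT: "h w \<in> insert z T" if "w \<in> T" for w
    using that pole_mapsD(1)[OF f] by (auto simp: h_def)
  have hU: "h w \<in> insert z U" if "w \<in> U" for w
    using that disj pole_mapsD(1)[OF g] by (auto simp: h_def)
  have ext: "h \<in> extensional (T \<union> U)"
    using pole_maps_extensional[OF f] pole_maps_extensional[OF g] by (auto simp: h_def extensional_def)
  have poles: "h y \<in> T \<union> U \<and> h (h y) = z \<and> (\<exists>!w. w \<in> T \<union> U \<and> w \<noteq> y \<and> h w = h y)"
    if y: "y \<in> T \<union> U" "h y \<noteq> z" for y
  proof (cases "y \<in> T")
    case True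
    then have hy: "h y = f y" "f y \<noteq> z" using y(2) by (simp_all add: h_def)
    note f_props = pole_mapsD[OF f True hy(2)]
    have partner: "w \<in> T \<union> U \<and> w \<noteq> y \<and> h w = h y \<longleftrightarrow> w \<in> T \<and> w \<noteq> y \<and> f w = f y" for w
      using hU[of w] hy f_props(1) disj z by (auto simp: h_def)
    have "h (h y) = z" using hy f_props(1,2) by (simp add: h_def)
    then show ?thesis unfolding partner using f_props hy by simp
  next
    case False
    then have yU: "y \<in> U" and hy: "h y = g y" "g y \<noteq> z" using y by (simp_all add: h_def)
    note g_props = pole_mapsD[OF g yU hy(2)]
    have partner: "w \<in> T \<union> U \<and> w \<noteq> y \<and> h w = h y \<longleftrightarrow> w \<in> U \<and> w \<noteq> y \<and> g w = g y" for w
      using hT[of w] hy g_props(1) disj z by (auto simp: h_def)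
    have "g y \<notin> T" using g_props(1) disj by blast
    then have "h (h y) = z" using hy g_props(2) by (simp add: h_def)
    then show ?thesis unfolding partner using g_props hy by simp
  qed
  have "h \<in> pole_maps (T \<union> U) z" using ext poles by (rule pole_mapsI)
  then show ?thesis by (simp only: h_def)
qed

lemma pole_maps_restrict:
  assumes h: "h \<in> pole_maps B z" and "S \<subseteq> B"
    and into: "\<And>y. y \<in> S \<Longrightarrow> h y \<in> insert z S"
    and not_into: "\<And>y. y \<in> B - S \<Longrightarrow> h y \<notin> S"
  shows "restrict h S \<in> pole_maps S z"
proof (rule pole_mapsI)
  fix y assume y: "y \<in> S" "restrict h S y \<noteq> z"
  then have hy: "h y \<noteq> z" "h y \<in> S" using into[OF y(1)] by auto
  have "y \<in> B" using y(1) \<open>S \<subseteq> B\<close> by blast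
  note h_props = pole_mapsD[OF h this hy(1)]
  have partner: "w \<in> B \<and> w \<noteq> y \<and> h w = h y \<longleftrightarrow> w \<in> S \<and> w \<noteq> y \<and> h w = h y" for w
    using not_into[of w] hy(2) \<open>S \<subseteq> B\<close> by (metis DiffI subsetD)
  show "restrict h S y \<in> S \<and> restrict h S (restrict h S y) = z \<and>
      (\<exists>!w. w \<in> S \<and> w \<noteq> y \<and> restrict h S w = restrict h S y)"
    using h_props(2,3) y(1) hy(2) \<open>S \<subseteq> B\<close> unfolding partner
    by (auto simp: restrict_def)
qed simp

lemma card_3_obtain:
  assumes "card T = 3" "c \<in> T"
  obtains a b where "T = {c, a, b}" "a \<noteq> b" "a \<noteq> c" "b \<noteq> c"
proof -
  have "card (T - {c}) = 2" using assms by (simp add: card_Diff_singleton_if)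
  then obtain a b where ab: "T - {c} = {a, b}" "a \<noteq> b" by (auto simp: card_2_iff)
  then have "T = {c, a, b}" using assms(2) by auto
  then show ?thesis using that ab by auto
qed

lemma star_pole_map:
  assumes "a \<noteq> b" "a \<noteq> c" "b \<noteq> c" "z \<notin> {c, a, b}"
  shows "restrict (\<lambda>y. if y = c then z else c) {c, a, b} \<in> pole_maps {c, a, b} z"
proof (rule pole_mapsI)
  let ?s = "restrict (\<lambda>y. if y = c then z else c) {c, a, b}"
  fix y assume y: "y \<in> {c, a, b}" "?s y \<noteq> z"
  then have "y = a \<or> y = b" and sy: "?s y = c" by auto
  then have partner: "w \<in> {c, a, b} \<and> w \<noteq> y \<and> ?s w = ?s y \<longleftrightarrow> w = (if y = a then b else a)" for w
    using assms by auto
  show "?s y \<in> {c, a, b} \<and> ?s (?s y) = z \<and> (\<exists>!w. w \<in> {c, a, b} \<and> w \<noteq> y \<and> ?s w = ?s y)"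
    unfolding partner using sy by simp
qed simp

definition add_star :: "'b \<Rightarrow> 'b set \<Rightarrow> 'b \<Rightarrow> ('b \<Rightarrow> 'b) \<Rightarrow> 'b \<Rightarrow> 'b" where
  "add_star z T c g = (\<lambda>y. if y \<in> T then if y = c then z else c else g y)"

lemma add_star_pole_map:
  assumes "z \<notin> B" "T \<subseteq> B" "card T = 3" "c \<in> T" "g \<in> pole_maps (B - T) z"
  shows "add_star z T c g \<in> pole_maps B z"
proof -
  obtain a b where T: "T = {c, a, b}" and ab: "a \<noteq> b" "a \<noteq> c" "b \<noteq> c"
    using card_3_obtain[OF assms(3,4)] .
  have "restrict (\<lambda>y. if y = c then z else c) T \<in> pole_maps T z"
    using star_pole_map[OF ab] assms(1,2) unfolding T by blast
  from pole_maps_glue[OF _ _ this assms(5)]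
  have "(\<lambda>y. if y \<in> T then restrict (\<lambda>y. if y = c then z else c) T y else g y) \<in> pole_maps (T \<union> (B - T)) z"
    using assms(1,2) by blast
  moreover have "T \<union> (B - T) = B" using assms(2) by blast
  moreover have "(\<lambda>y. if y \<in> T then restrict (\<lambda>y. if y = c then z else c) T y else g y) = add_star z T c g"
    by (simp add: add_star_def fun_eq_iff)
  ultimately show ?thesis by simp
qed

lemma add_star_determined:
  assumes "z \<notin> B" "T \<subseteq> B" "card T = 3" "c \<in> T" "x \<in> T" "g \<in> pole_maps (B - T) z"
  defines "h \<equiv> add_star z T c g"
  shows "c = (if h x = z then x else h x)" "T = {y \<in> B. y = c \<or> h y = c}" "g = restrict h (B - T)"
proof -
  have c: "c \<noteq> z" using assms(1,2,4) by blast
  show "c = (if h x = z then x else h x)"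
    using assms(5) c by (auto simp: h_def add_star_def)
  have "g y \<noteq> c" if "y \<in> B - T" for y
    using pole_mapsD(1)[OF assms(6) that] assms(4) c by blast
  then show "T = {y \<in> B. y = c \<or> h y = c}"
    using assms(2,4) by (auto simp: h_def add_star_def)
  show "g = restrict h (B - T)"
    using pole_maps_extensional[OF assms(6)] by (auto simp: h_def add_star_def restrict_def extensional_def)
qed

lemma pole_map_star:
  assumes h: "h \<in> pole_maps B z" and y: "y \<in> B" "h y \<noteq> z"
  obtains p where "p \<in> B" "p \<noteq> y" "h p = h y" "h y \<noteq> y" "h y \<noteq> p" "h (h y) = z"
    "\<forall>w\<in>B. h w = h y \<longrightarrow> w = y \<or> w = p"
proof -
  note pole = pole_mapsD[OF h y]
  from pole(3) obtain p where "p \<in> B \<and> p \<noteq> y \<and> h p = h y"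
    and unique: "\<And>w. w \<in> B \<and> w \<noteq> y \<and> h w = h y \<Longrightarrow> w = p"
    by (rule ex1E) blast
  moreover have "h y \<noteq> y" using pole(2) y(2) by auto
  ultimately show ?thesis using that pole(2) y(2) by (metis (full_types))
qed

lemma pole_maps_remove_star:
  assumes h: "h \<in> pole_maps B z" and z: "z \<notin> B" and "T \<subseteq> B" "c \<in> T"
    and h_T: "\<And>w. w \<in> T \<Longrightarrow> h w = (if w = c then z else c)"
    and to_c: "\<And>w. w \<in> B \<Longrightarrow> h w = c \<Longrightarrow> w \<in> T"
  shows "restrict h (B - T) \<in> pole_maps (B - T) z" "h = add_star z T c (restrict h (B - T))"
proof -
  show "restrict h (B - T) \<in> pole_maps (B - T) z"
  proof (rule pole_maps_restrict[OF h])
    fix w assume w: "w \<in> B - T"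
    show "h w \<in> insert z (B - T)"
    proof (cases "h w = z")
      case False
      have "h w \<noteq> c" using to_c[of w] w by blast
      moreover have "h (h w) \<noteq> c" using pole_mapsD(2)[OF h _ False] w \<open>c \<in> T\<close> \<open>T \<subseteq> B\<close> z by auto
      ultimately show ?thesis using pole_mapsD(1)[OF h _ False] w h_T[of "h w"] by auto
    qed simp
  next
    fix w assume "w \<in> B - (B - T)"
    then show "h w \<notin> B - T" using h_T[of w] z \<open>c \<in> T\<close> by auto
  qed auto
  show "h = add_star z T c (restrict h (B - T))"
  proof
    fix w show "h w = add_star z T c (restrict h (B - T)) w"
      using h_T[of w] pole_maps_extensional[OF h] by (auto simp: add_star_def extensional_def)
  qed
qed

lemma pole_map_split_star:
  assumes h: "h \<in> pole_maps B z" and z: "z \<notin> B" and x: "x \<in> B"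
    and not_isolated: "\<not> (h x = z \<and> (\<forall>y\<in>B. h y \<noteq> x))"
  obtains T c g where "T \<subseteq> B" "x \<in> T" "card T = 3" "c \<in> T" "g \<in> pole_maps (B - T) z"
    "h = add_star z T c g"
proof -
  obtain y where y: "y \<in> B" "h y \<noteq> z" "x = y \<or> x = h y"
  proof (cases "h x = z")
    case True
    then obtain y where "y \<in> B" "h y = x" using not_isolated by blast
    then show ?thesis using that x z by blast
  qed (use that x in blast)
  obtain p where p: "p \<in> B" "p \<noteq> y" "h p = h y" "h y \<noteq> y" "h y \<noteq> p" "h (h y) = z"
    and star: "\<forall>w\<in>B. h w = h y \<longrightarrow> w = y \<or> w = p"
    using pole_map_star[OF h y(1,2)] .
  define T where "T = {h y, y, p}"
  have T_sub: "T \<subseteq> B" using pole_mapsD(1)[OF h y(1,2)] y(1) p(1) by (simp add: T_def)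
  have c_in: "h y \<in> T" and x_in: "x \<in> T" using y(3) by (auto simp: T_def)
  have card_T: "card T = 3" using p(2,4,5) by (simp add: T_def)
  have "h w = (if w = h y then z else h y)" if "w \<in> T" for w
    using that p(3-6) unfolding T_def by auto
  moreover have "w \<in> T" if "w \<in> B" "h w = h y" for w
    using star that unfolding T_def by blast
  ultimately have "restrict h (B - T) \<in> pole_maps (B - T) z" "h = add_star z T (h y) (restrict h (B - T))"
    using pole_maps_remove_star[OF h z T_sub c_in] by blast+
  then show ?thesis by (rule that[OF T_sub x_in card_T c_in])
qed

lemma bij_betw_isolated_pole_maps:
  assumes z: "z \<notin> B" and x: "x \<in> B"
  shows "bij_betw (\<lambda>h. restrict h (B - {x})) {h \<in> pole_maps B z. h x = z \<and> (\<forall>y\<in>B. h y \<noteq> x)}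
           (pole_maps (B - {x}) z)"
proof (rule bij_betw_byWitness[where f' = "\<lambda>g. g(x := z)"])
  show "\<forall>h\<in>{h \<in> pole_maps B z. h x = z \<and> (\<forall>y\<in>B. h y \<noteq> x)}. (restrict h (B - {x}))(x := z) = h"
    using x by (auto simp: fun_eq_iff pole_maps_def extensional_def)
  show "\<forall>g\<in>pole_maps (B - {x}) z. restrict (g(x := z)) (B - {x}) = g"
    by (auto simp: fun_eq_iff pole_maps_def extensional_def)
  show "(\<lambda>h. restrict h (B - {x})) ` {h \<in> pole_maps B z. h x = z \<and> (\<forall>y\<in>B. h y \<noteq> x)} \<subseteq> pole_maps (B - {x}) z"
  proof
    fix g assume "g \<in> (\<lambda>h. restrict h (B - {x})) ` {h \<in> pole_maps B z. h x = z \<and> (\<forall>y\<in>B. h y \<noteq> x)}"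
    then obtain h where h: "h \<in> pole_maps B z" "h x = z" "\<forall>y\<in>B. h y \<noteq> x"
      and g: "g = restrict h (B - {x})" by auto
    show "g \<in> pole_maps (B - {x}) z" unfolding g
    proof (rule pole_maps_restrict[OF h(1)])
      show "h y \<in> insert z (B - {x})" if "y \<in> B - {x}" for y
        using pole_mapsD(1)[OF h(1), of y] h(3) that by auto
      show "h y \<notin> B - {x}" if "y \<in> B - (B - {x})" for y
        using that h(2) z by auto
    qed auto
  qed
  show "(\<lambda>g. g(x := z)) ` pole_maps (B - {x}) z \<subseteq> {h \<in> pole_maps B z. h x = z \<and> (\<forall>y\<in>B. h y \<noteq> x)}"
  proof clarify
    fix g assume g: "g \<in> pole_maps (B - {x}) z"
    have "(\<lambda>y. if y \<in> {x} then restrict (\<lambda>_. z) {x} y else g y) \<in> pole_maps ({x} \<union> (B - {x})) z"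
      using pole_maps_glue[OF _ _ const_pole_map g] z x by blast
    moreover have "(\<lambda>y. if y \<in> {x} then restrict (\<lambda>_. z) {x} y else g y) = g(x := z)"
      by (simp add: fun_eq_iff)
    moreover have "{x} \<union> (B - {x}) = B" using x by blast
    moreover have "g y \<noteq> x" if "y \<in> B - {x}" for y
      using pole_mapsD(1)[OF g that] z x by auto
    ultimately show "g(x := z) \<in> pole_maps B z \<and> (g(x := z)) x = z \<and> (\<forall>y\<in>B. (g(x := z)) y \<noteq> x)"
      using z x by auto
  qed
qed

lemma add_star_not_isolated:
  assumes "z \<notin> B" "T \<subseteq> B" "card T = 3" "c \<in> T" "x \<in> T"
  shows "\<not> (add_star z T c g x = z \<and> (\<forall>y\<in>B. add_star z T c g y \<noteq> x))"
proof (cases "x = c")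
  case True
  obtain a b where "T = {c, a, b}" "a \<noteq> c" using card_3_obtain[OF assms(3,4)] by metis
  then show ?thesis using True assms(2) by (auto simp: add_star_def)
next
  case False
  then show ?thesis using assms by (auto simp: add_star_def)
qed

lemma inj_on_add_star:
  assumes z: "z \<notin> B" and x: "x \<in> B"
  shows "inj_on (\<lambda>(T, c, g). add_star z T c g)
           (SIGMA T:{T. T \<subseteq> B \<and> x \<in> T \<and> card T = 3}. T \<times> pole_maps (B - T) z)"
proof (rule inj_onI, clarify)
  fix T c g T' c' g'
  assume "T \<subseteq> B" "x \<in> T" "card T = 3" "c \<in> T" "g \<in> pole_maps (B - T) z"
    and "T' \<subseteq> B" "x \<in> T'" "card T' = 3" "c' \<in> T'" "g' \<in> pole_maps (B - T') z"
    and eq: "add_star z T c g = add_star z T' c' g'"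
  note det = add_star_determined[OF z \<open>T \<subseteq> B\<close> \<open>card T = 3\<close> \<open>c \<in> T\<close> \<open>x \<in> T\<close> \<open>g \<in> _\<close>]
    and det' = add_star_determined[OF z \<open>T' \<subseteq> B\<close> \<open>card T' = 3\<close> \<open>c' \<in> T'\<close> \<open>x \<in> T'\<close> \<open>g' \<in> _\<close>]
  have "c = c'" using det(1) det'(1) unfolding eq by simp
  moreover have "T = T'" using det(2) det'(2) \<open>c = c'\<close> unfolding eq by simp
  moreover have "g = g'" using det(3) det'(3) \<open>T = T'\<close> unfolding eq by simp
  ultimately show "T = T' \<and> (c, g) = (c', g')" by simp
qed

lemma bij_betw_star_pole_maps:
  assumes z: "z \<notin> B" and x: "x \<in> B"
  shows "bij_betw (\<lambda>(T, c, g). add_star z T c g)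
           (SIGMA T:{T. T \<subseteq> B \<and> x \<in> T \<and> card T = 3}. T \<times> pole_maps (B - T) z)
           {h \<in> pole_maps B z. \<not> (h x = z \<and> (\<forall>y\<in>B. h y \<noteq> x))}"
proof (rule bij_betw_imageI[OF inj_on_add_star[OF z x]])
  show "(\<lambda>(T, c, g). add_star z T c g) ` (SIGMA T:{T. T \<subseteq> B \<and> x \<in> T \<and> card T = 3}. T \<times> pole_maps (B - T) z) =
      {h \<in> pole_maps B z. \<not> (h x = z \<and> (\<forall>y\<in>B. h y \<noteq> x))}"
  proof (intro equalityI subsetI)
    fix h assume "h \<in> (\<lambda>(T, c, g). add_star z T c g) ` (SIGMA T:{T. T \<subseteq> B \<and> x \<in> T \<and> card T = 3}. T \<times> pole_maps (B - T) z)"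
    then obtain T c g where T: "T \<subseteq> B" "x \<in> T" "card T = 3" "c \<in> T" "g \<in> pole_maps (B - T) z"
      and h: "h = add_star z T c g" by auto
    show "h \<in> {h \<in> pole_maps B z. \<not> (h x = z \<and> (\<forall>y\<in>B. h y \<noteq> x))}"
      unfolding h using add_star_pole_map[OF z T(1,3,4,5)] add_star_not_isolated[OF z T(1,3,4,2)] by simp
  next
    fix h assume "h \<in> {h \<in> pole_maps B z. \<not> (h x = z \<and> (\<forall>y\<in>B. h y \<noteq> x))}"
    then have "h \<in> pole_maps B z" "\<not> (h x = z \<and> (\<forall>y\<in>B. h y \<noteq> x))" by simp_all
    then obtain T c g where "T \<subseteq> B" "x \<in> T" "card T = 3" "c \<in> T" "g \<in> pole_maps (B - T) z"
      "h = add_star z T c g"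
      using pole_map_split_star[OF _ z x] by metis
    then show "h \<in> (\<lambda>(T, c, g). add_star z T c g) ` (SIGMA T:{T. T \<subseteq> B \<and> x \<in> T \<and> card T = 3}. T \<times> pole_maps (B - T) z)"
      by (intro image_eqI[where x = "(T, c, g)"]) auto
  qed
qed

lemma card_3_subsets_containing:
  assumes "finite B" "x \<in> B"
  shows "card {T. T \<subseteq> B \<and> x \<in> T \<and> card T = 3} = (card B - 1) choose 2"
proof -
  have "bij_betw (insert x) {U. U \<subseteq> B - {x} \<and> card U = 2} {T. T \<subseteq> B \<and> x \<in> T \<and> card T = 3}"
  proof (rule bij_betw_byWitness[where f' = "\<lambda>T. T - {x}"])
    show "\<forall>U\<in>{U. U \<subseteq> B - {x} \<and> card U = 2}. insert x U - {x} = U" by auto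
    show "\<forall>T\<in>{T. T \<subseteq> B \<and> x \<in> T \<and> card T = 3}. insert x (T - {x}) = T" by auto
    show "insert x ` {U. U \<subseteq> B - {x} \<and> card U = 2} \<subseteq> {T. T \<subseteq> B \<and> x \<in> T \<and> card T = 3}"
    proof clarify
      fix U assume U: "U \<subseteq> B - {x}" "card U = 2"
      then have "finite U" "x \<notin> U" using assms(1) by (auto intro: finite_subset)
      then show "insert x U \<subseteq> B \<and> x \<in> insert x U \<and> card (insert x U) = 3"
        using U assms(2) by auto
    qed
    show "(\<lambda>T. T - {x}) ` {T. T \<subseteq> B \<and> x \<in> T \<and> card T = 3} \<subseteq> {U. U \<subseteq> B - {x} \<and> card U = 2}"
      using assms finite_subset[of _ B] by auto
  qed
  then show ?thesis
    using bij_betw_same_card n_subsets[of "B - {x}" 2] assms by fastforce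
qed

lemma card_pole_maps_decompose:
  assumes "finite B" "z \<notin> B" "x \<in> B"
  shows "card (pole_maps B z) = card (pole_maps (B - {x}) z) +
           (\<Sum>T | T \<subseteq> B \<and> x \<in> T \<and> card T = 3. 3 * card (pole_maps (B - T) z))"
proof -
  define isolated where "isolated = {h \<in> pole_maps B z. h x = z \<and> (\<forall>y\<in>B. h y \<noteq> x)}"
  have card_isolated: "card isolated = card (pole_maps (B - {x}) z)"
    using bij_betw_same_card[OF bij_betw_isolated_pole_maps[OF assms(2,3)]] by (simp add: isolated_def)
  have "pole_maps B z - isolated = {h \<in> pole_maps B z. \<not> (h x = z \<and> (\<forall>y\<in>B. h y \<noteq> x))}"
    by (auto simp: isolated_def)
  then have "card (pole_maps B z - isolated) =
      card (SIGMA T:{T. T \<subseteq> B \<and> x \<in> T \<and> card T = 3}. T \<times> pole_maps (B - T) z)"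
    using bij_betw_same_card[OF bij_betw_star_pole_maps[OF assms(2,3)]] by simp
  also have "\<dots> = (\<Sum>T | T \<subseteq> B \<and> x \<in> T \<and> card T = 3. card (T \<times> pole_maps (B - T) z))"
    using assms(1) by (intro card_SigmaI) (auto intro: finite_subset finite_pole_maps)
  also have "\<dots> = (\<Sum>T | T \<subseteq> B \<and> x \<in> T \<and> card T = 3. 3 * card (pole_maps (B - T) z))"
    using assms(1) by (intro sum.cong) (auto simp: card_cartesian_product intro: finite_subset)
  finally have card_rest: "card (pole_maps B z - isolated) =
      (\<Sum>T | T \<subseteq> B \<and> x \<in> T \<and> card T = 3. 3 * card (pole_maps (B - T) z))" .
  have "isolated \<subseteq> pole_maps B z" by (auto simp: isolated_def)
  then have "card (pole_maps B z) = card isolated + card (pole_maps B z - isolated)"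
    using finite_pole_maps[OF assms(1)] by (metis card_Diff_subset card_mono finite_subset le_add_diff_inverse)
  then show ?thesis using card_isolated card_rest by simp
qed

lemma card_pole_maps:
  assumes "finite B" "z \<notin> B"
  shows "card (pole_maps B z) = pole_map_count (card B)"
  using assms
proof (induction "card B" arbitrary: B rule: less_induct)
  case less
  show ?case
  proof (cases "B = {}")
    case True
    then show ?thesis by (simp add: pole_maps_empty)
  next
    case False
    then obtain x where x: "x \<in> B" by blast
    define m where "m = card B - 1"
    have "card B > 0" using less.prems(1) x card_gt_0_iff by blast
    then have card_B: "card B = Suc m" by (simp add: m_def)
    have "card (pole_maps (B - T) z) = pole_map_count (m - 2)"
      if "T \<subseteq> B" "card T = 3" for T
      using that less.hyps[of "B - T"] less.prems card_B
      by (simp add: card_Diff_subset finite_subset)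
    then have "(\<Sum>T | T \<subseteq> B \<and> x \<in> T \<and> card T = 3. 3 * card (pole_maps (B - T) z)) =
        (m choose 2) * (3 * pole_map_count (m - 2))"
      using card_3_subsets_containing[OF less.prems(1) x] card_B by simp
    moreover have "card (pole_maps (B - {x}) z) = pole_map_count m"
      using less.hyps[of "B - {x}"] less.prems x card_B by simp
    ultimately show ?thesis
      using card_pole_maps_decompose[OF less.prems x] card_B by simp
  qed
qed

section \<open>Polestar systems as graphs of pole maps on partitions\<close>

lemma pole_map_graph_partner:
  assumes h: "h \<in> pole_maps P z" and S: "S \<in> P" "h S \<noteq> z"
  shows "(h S, z) \<in> (\<lambda>S. (S, h S)) ` P"
    and "\<exists>!q. q \<in> (\<lambda>S. (S, h S)) ` P \<and> q \<noteq> (S, h S) \<and> snd q = h S"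
proof -
  note pole = pole_mapsD[OF h S]
  show "(h S, z) \<in> (\<lambda>S. (S, h S)) ` P"
    by (rule image_eqI[where x = "h S"]) (simp_all add: pole(1,2))
  from pole(3) obtain S' where S': "S' \<in> P \<and> S' \<noteq> S \<and> h S' = h S"
    and unique: "\<And>R. R \<in> P \<and> R \<noteq> S \<and> h R = h S \<Longrightarrow> R = S'"
    by (rule ex1E) blast
  show "\<exists>!q. q \<in> (\<lambda>S. (S, h S)) ` P \<and> q \<noteq> (S, h S) \<and> snd q = h S"
  proof (rule ex1I[where a = "(S', h S')"])
    show "(S', h S') \<in> (\<lambda>S. (S, h S)) ` P \<and> (S', h S') \<noteq> (S, h S) \<and> snd (S', h S') = h S"
      using S' imageI[of S' P "\<lambda>S. (S, h S)"] by auto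
    fix q assume q: "q \<in> (\<lambda>S. (S, h S)) ` P \<and> q \<noteq> (S, h S) \<and> snd q = h S"
    then obtain R where R: "R \<in> P" "q = (R, h R)" by auto
    then have "R = S'" using q unique[of R] by auto
    then show "q = (S', h S')" using R(2) by simp
  qed
qed

lemma polestar_system_graph:
  assumes P: "partition_on X P" and h: "h \<in> pole_maps P {}"
  shows "polestar_system X ((\<lambda>S. (S, h S)) ` P)"
proof -
  have pairs: "S \<subseteq> X \<and> h S \<subseteq> X \<and> S \<noteq> {} \<and> S \<inter> h S = {}" if S: "S \<in> P" for S
  proof -
    have "S \<subseteq> X" "S \<noteq> {}" using S partition_onD1[OF P] partition_onD3[OF P] by auto
    moreover have "h S \<subseteq> X \<and> S \<inter> h S = {}"
    proof (cases "h S = {}")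
      case False
      then have "h S \<in> P" "h S \<noteq> S" using pole_mapsD(1,2)[OF h S] by auto
      then show ?thesis
        using disjointD[OF partition_onD2[OF P] S] partition_onD1[OF P] by blast
    qed simp
    ultimately show ?thesis by blast
  qed
  show ?thesis
    unfolding polestar_system_def set_pair_system_def
    using P pairs pole_map_graph_partner[OF h] by (simp add: image_image)
qed

lemma polestar_system_pole_unique:
  assumes "polestar_system X \<S>" "(S, H) \<in> \<S>" "(S, H') \<in> \<S>"
  shows "H = H'"
proof -
  have "\<forall>p\<in>\<S>. \<forall>q\<in>\<S>. p \<noteq> q \<longrightarrow> fst p \<noteq> fst q"
    using assms(1) by (simp add: polestar_system_def)
  then show ?thesis using assms(2,3) by (metis fst_conv prod.inject)
qed

lemma polestar_system_pole_pole:
  assumes "polestar_system X \<S>" "(S, H) \<in> \<S>" "H \<noteq> {}"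
  shows "(H, {}) \<in> \<S>" "\<exists>!q. q \<in> \<S> \<and> q \<noteq> (S, H) \<and> snd q = H"
proof -
  have "\<forall>(S, H) \<in> \<S>. H \<noteq> {} \<longrightarrow> (H, {}) \<in> \<S> \<and> (\<exists>!q. q \<in> \<S> \<and> q \<noteq> (S, H) \<and> snd q = H)"
    using assms(1) by (simp add: polestar_system_def)
  from bspec[OF this assms(2)]
  have "(H, {}) \<in> \<S> \<and> (\<exists>!q. q \<in> \<S> \<and> q \<noteq> (S, H) \<and> snd q = H)"
    using assms(3) by simp
  then show "(H, {}) \<in> \<S>" "\<exists>!q. q \<in> \<S> \<and> q \<noteq> (S, H) \<and> snd q = H" by simp_all
qed

definition pole_of :: "('a set \<times> 'a set) set \<Rightarrow> 'a set \<Rightarrow> 'a set" where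
  "pole_of \<S> = restrict (\<lambda>S. THE H. (S, H) \<in> \<S>) (fst ` \<S>)"

lemma pole_of_eq:
  assumes ps: "polestar_system X \<S>" and SH: "(S, H) \<in> \<S>"
  shows "pole_of \<S> S = H"
proof -
  have "(THE H. (S, H) \<in> \<S>) = H"
  proof (rule the_equality)
    show "(S, H) \<in> \<S>" by (rule SH)
    show "H' = H" if "(S, H') \<in> \<S>" for H'
      using polestar_system_pole_unique[OF ps that SH] .
  qed
  moreover have "S \<in> fst ` \<S>" by (rule image_eqI[where x = "(S, H)"]) (simp_all add: SH)
  ultimately show ?thesis by (simp add: pole_of_def)
qed

lemma polestar_system_eq_graph:
  assumes ps: "polestar_system X \<S>"
  shows "\<S> = (\<lambda>S. (S, pole_of \<S> S)) ` fst ` \<S>"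
proof
  show "\<S> \<subseteq> (\<lambda>S. (S, pole_of \<S> S)) ` fst ` \<S>"
  proof
    fix p assume p: "p \<in> \<S>"
    then have "(fst p, snd p) \<in> \<S>" by simp
    then have "p = (fst p, pole_of \<S> (fst p))" using pole_of_eq[OF ps] by (metis prod.collapse)
    then show "p \<in> (\<lambda>S. (S, pole_of \<S> S)) ` fst ` \<S>" using p by (metis image_eqI)
  qed
  show "(\<lambda>S. (S, pole_of \<S> S)) ` fst ` \<S> \<subseteq> \<S>"
  proof
    fix p assume "p \<in> (\<lambda>S. (S, pole_of \<S> S)) ` fst ` \<S>"
    then obtain q where q: "q \<in> \<S>" "p = (fst q, pole_of \<S> (fst q))" by auto
    have "pole_of \<S> (fst q) = snd q" using pole_of_eq[OF ps, of "fst q" "snd q"] q(1) by simp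
    then show "p \<in> \<S>" using q by simp
  qed
qed

lemma pole_of_pole_maps:
  assumes ps: "polestar_system X \<S>"
  shows "pole_of \<S> \<in> pole_maps (fst ` \<S>) {}"
proof (rule pole_mapsI)
  show "pole_of \<S> \<in> extensional (fst ` \<S>)" by (simp add: pole_of_def)
next
  fix S assume S: "S \<in> fst ` \<S>" "pole_of \<S> S \<noteq> {}"
  have graph: "\<S> = (\<lambda>S. (S, pole_of \<S> S)) ` fst ` \<S>" by (rule polestar_system_eq_graph[OF ps])
  have mem: "(S, pole_of \<S> S) \<in> \<S>" using S(1) by (subst graph) simp
  note PL3 = polestar_system_pole_pole[OF ps mem S(2)]
  have "pole_of \<S> S \<in> fst ` \<S>" by (rule image_eqI[OF _ PL3(1)]) simp
  moreover have "pole_of \<S> (pole_of \<S> S) = {}" by (rule pole_of_eq[OF ps PL3(1)])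
  moreover have "\<exists>!S'. S' \<in> fst ` \<S> \<and> S' \<noteq> S \<and> pole_of \<S> S' = pole_of \<S> S"
  proof -
    from PL3(2) obtain q where q: "q \<in> \<S>" "q \<noteq> (S, pole_of \<S> S)" "snd q = pole_of \<S> S"
      and unique: "\<And>r. r \<in> \<S> \<and> r \<noteq> (S, pole_of \<S> S) \<and> snd r = pole_of \<S> S \<Longrightarrow> r = q"
      by (rule ex1E) blast
    have q_eq: "q = (fst q, pole_of \<S> (fst q))" using q(1) pole_of_eq[OF ps, of "fst q" "snd q"] by simp
    show ?thesis
    proof (rule ex1I[where a = "fst q"])
      have "fst q \<noteq> S" using q(2) q_eq by auto
      moreover have "pole_of \<S> (fst q) = pole_of \<S> S" using q(3) q_eq by (metis snd_conv)
      ultimately show "fst q \<in> fst ` \<S> \<and> fst q \<noteq> S \<and> pole_of \<S> (fst q) = pole_of \<S> S"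
        using imageI[OF q(1), of fst] by blast
      fix R assume R: "R \<in> fst ` \<S> \<and> R \<noteq> S \<and> pole_of \<S> R = pole_of \<S> S"
      then have "(R, pole_of \<S> R) \<in> \<S>" by (subst graph) auto
      then have "(R, pole_of \<S> R) = q" using R by (intro unique) simp
      then show "R = fst q" by auto
    qed
  qed
  ultimately show "pole_of \<S> S \<in> fst ` \<S> \<and> pole_of \<S> (pole_of \<S> S) = {} \<and>
      (\<exists>!S'. S' \<in> fst ` \<S> \<and> S' \<noteq> S \<and> pole_of \<S> S' = pole_of \<S> S)"
    by blast
qed

lemma inj_on_graphs:
  "inj_on (\<lambda>(P, h). (\<lambda>S. (S, h S)) ` P) (SIGMA P:UNIV. extensional P)"
proof (rule inj_onI, clarify)
  fix P h P' h'
  assume h: "h \<in> extensional P" and h': "h' \<in> extensional P'"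
    and eq: "(\<lambda>S. (S, h S)) ` P = (\<lambda>S. (S, h' S)) ` P'"
  have "P = fst ` (\<lambda>S. (S, h S)) ` P" by (simp add: image_image)
  also have "\<dots> = P'" unfolding eq by (simp add: image_image)
  finally have "P = P'" .
  have "h S = h' S" if S: "S \<in> P" for S
  proof -
    have "(S, h S) \<in> (\<lambda>S. (S, h' S)) ` P'" unfolding eq[symmetric] using S by (rule imageI)
    then show ?thesis by auto
  qed
  then have "h = h'" using h h' \<open>P = P'\<close> by (intro extensionalityI) auto
  with \<open>P = P'\<close> show "P = P' \<and> h = h'" ..
qed

lemma bij_betw_polestar_systems:
  "bij_betw (\<lambda>(P, h). (\<lambda>S. (S, h S)) ` P) (SIGMA P:{P. partition_on X P}. pole_maps P {})
     (polestar_systems X)"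
proof (rule bij_betw_imageI)
  show "inj_on (\<lambda>(P, h). (\<lambda>S. (S, h S)) ` P) (SIGMA P:{P. partition_on X P}. pole_maps P {})"
    by (rule inj_on_subset[OF inj_on_graphs]) (auto dest: pole_maps_extensional)
  show "(\<lambda>(P, h). (\<lambda>S. (S, h S)) ` P) ` (SIGMA P:{P. partition_on X P}. pole_maps P {}) =
      polestar_systems X"
  proof (intro equalityI subsetI)
    fix \<S> assume "\<S> \<in> (\<lambda>(P, h). (\<lambda>S. (S, h S)) ` P) ` (SIGMA P:{P. partition_on X P}. pole_maps P {})"
    then obtain P h where "partition_on X P" "h \<in> pole_maps P {}" "\<S> = (\<lambda>S. (S, h S)) ` P"
      by auto
    then show "\<S> \<in> polestar_systems X"
      by (simp add: polestar_systems_def polestar_system_graph)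
  next
    fix \<S> assume "\<S> \<in> polestar_systems X"
    then have ps: "polestar_system X \<S>" by (simp add: polestar_systems_def)
    then have "partition_on X (fst ` \<S>)" by (simp add: polestar_system_def)
    then show "\<S> \<in> (\<lambda>(P, h). (\<lambda>S. (S, h S)) ` P) ` (SIGMA P:{P. partition_on X P}. pole_maps P {})"
      using polestar_system_eq_graph[OF ps] pole_of_pole_maps[OF ps]
      by (intro image_eqI[where x = "(fst ` \<S>, pole_of \<S>)"]) simp_all
  qed
qed

lemma card_polestar_systems:
  assumes "finite X"
  shows "card (polestar_systems X) = (\<Sum>P | partition_on X P. pole_map_count (card P))"
proof -
  have "card (polestar_systems X) = card (SIGMA P:{P. partition_on X P}. pole_maps P {})"
    using bij_betw_same_card[OF bij_betw_polestar_systems[of X]] by simp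
  also have "\<dots> = (\<Sum>P | partition_on X P. card (pole_maps P {}))"
    using finitely_many_partition_on[OF assms] finite_elements[OF assms]
    by (intro card_SigmaI) (auto intro: finite_pole_maps)
  also have "\<dots> = (\<Sum>P | partition_on X P. pole_map_count (card P))"
    using finite_elements[OF assms] partition_onD3 by (intro sum.cong) (auto intro!: card_pole_maps)
  finally show ?thesis .
qed

theorem mainTheorem10:
  fixes X :: "'a set" and n :: nat
  assumes "finite X" and "card X = n" and "n \<ge> 1"
  shows "real (card (polestar_systems X)) =
    (\<Sum>k = 1..n. real (Stirling n k) *
       (\<Sum>l = 0..k div 3. (fact k / (6 ^ l * fact l * fact (k - 3 * l))) * 3 ^ l))"
proof -
  have "real (card (polestar_systems X)) = (\<Sum>P | partition_on X P. real (pole_map_count (card P)))"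
    by (simp add: card_polestar_systems[OF assms(1)])
  also have "\<dots> = (\<Sum>k\<le>n. real (Stirling n k) * real (pole_map_count k))"
    using sum_partitions_by_card[OF assms(1)] assms(2) by simp
  also have "\<dots> = (\<Sum>k = 1..n. real (Stirling n k) * real (pole_map_count k))"
  proof -
    have "{..n} = insert 0 {1..n}" by auto
    moreover have "Stirling n 0 = 0" using assms(3) by (cases n) auto
    ultimately show ?thesis by simp
  qed
  finally show ?thesis by (simp add: pole_map_count_closed_form)
qed

end
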